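(* Let $\mathfrak{X}=(X,\{R_i\}_{i=0}^{d+1})$ be a commutative association scheme with $R_d^\top=R_{d+1}$ and $R_i^\top=R_i$ for $0\le i\le d-1$, adjacency matrices $A_0,\dots,A_{d+1}$ and primitive idempotents $E_0,\dots,E_{d+1}$; let $V_i=E_i\mathbb{C}^{|X|}$. Let its symmetrization $\tilde{\mathfrak X}=(X,\{\tilde R_i\}_{i=0}^d)$ ($\tilde R_i=R_i$ for $i\le d-1$, $\tilde R_d=R_d\cup R_{d+1}$) be amorphic with primitive idempotents $\tilde E_0,\dots,\tilde E_d$ numbered so that the adjacency matrix $\tilde A_i$ of $\tilde R_i$ (valency $k_i$) satisfies $\tilde A_i\tilde E_0=k_i\tilde E_0$, $\tilde A_i\tilde E_i=b_i\tilde E_i$, $\tilde A_i\tilde E_j=a_i\tilde E_j$ for $1\le j\le d$, $j\ne i$, with $a_i\ne b_i$. Let $1\le i,j\le d+1$ with $E_i,E_j\in\{\tilde E_1,\ldots,\tilde E_{d-1}\}$, and let $1\le r,s\le d-1$ be such that the eigenvalues of $A_r$ on $V_i$ and $V_j$ are $a_r$ and $b_r$ respectively, and the eigenvalues of $A_s$ on $V_i$ and $V_j$ are $b_s$ and $a_s$ respectively. Then $A_r$ and $A_s$ are the only two matrices among $A_0,\dots,A_{d+1}$ having distinct eigenvalues on $V_i$ and $V_j$.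
   Context: Association scheme: finite set $X$ with a partition of $X\times X$ into relations $R_0$ (diagonal), $R_1,\dots$, closed under transposition, with constant intersection numbers; commutative if these are symmetric in the lower indices. Adjacency matrices are the $01$-matrices of the relations; the primitive idempotents of the (commutative) Bose–Mesner algebra satisfy $A_iE_j=p_i(j)E_j$, and $p_i(j)$ is called the eigenvalue of $A_i$ on $V_j$. A symmetric scheme is amorphic if merging the nondiagonal relations along any partition of their index set into nonempty parts gives an association scheme. *)

theory Defs
  imports "HOL-Analysis.Analysis" "HOL-Library.Disjoint_Sets"
begin

text \<open>The ground set X is the (finite) type 'n; matrices are complex X x X matrices
  of type complex^'n^'n, multiplied with the library product (**).\<close>

definition adj :: "('n \<times> 'n) set \<Rightarrow> complex^'n^'n" where
  "adj R = (\<chi> x y. if (x, y) \<in> R then 1 else 0)"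

definition msc :: "complex \<Rightarrow> complex^'n^'n \<Rightarrow> complex^'n^'n" where
  "msc c M = (\<chi> x y. c * M $ x $ y)"

definition assoc_scheme :: "'i set \<Rightarrow> 'i \<Rightarrow> ('i \<Rightarrow> ('n::finite \<times> 'n) set) \<Rightarrow> bool" where
  "assoc_scheme I i0 R \<longleftrightarrow>
     finite I \<and> i0 \<in> I \<and> R i0 = Id \<and>
     (\<forall>i\<in>I. R i \<noteq> {}) \<and>
     (\<forall>i\<in>I. \<forall>j\<in>I. i \<noteq> j \<longrightarrow> R i \<inter> R j = {}) \<and>
     (\<Union>i\<in>I. R i) = UNIV \<and>
     (\<forall>i\<in>I. \<exists>j\<in>I. (R i)\<inverse> = R j) \<and>
     (\<forall>i\<in>I. \<forall>j\<in>I. \<forall>h\<in>I. \<exists>p. \<forall>x y. (x, y) \<in> R h \<longrightarrow>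
          card {z. (x, z) \<in> R i \<and> (z, y) \<in> R j} = p)"

text \<open>Commutativity: the intersection numbers p^h_ij are symmetric in i, j.\<close>
definition commutative_scheme :: "'i set \<Rightarrow> ('i \<Rightarrow> ('n::finite \<times> 'n) set) \<Rightarrow> bool" where
  "commutative_scheme I R \<longleftrightarrow>
     (\<forall>i\<in>I. \<forall>j\<in>I. \<forall>x y.
        card {z. (x, z) \<in> R i \<and> (z, y) \<in> R j} = card {z. (x, z) \<in> R j \<and> (z, y) \<in> R i})"

definition symmetric_scheme :: "'i set \<Rightarrow> 'i \<Rightarrow> ('i \<Rightarrow> ('n::finite \<times> 'n) set) \<Rightarrow> bool" where
  "symmetric_scheme I i0 R \<longleftrightarrow> assoc_scheme I i0 R \<and> (\<forall>i\<in>I. (R i)\<inverse> = R i)"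

definition amorphic :: "'i set \<Rightarrow> 'i \<Rightarrow> ('i \<Rightarrow> ('n::finite \<times> 'n) set) \<Rightarrow> bool" where
  "amorphic I i0 R \<longleftrightarrow> symmetric_scheme I i0 R \<and>
     (\<forall>P. partition_on (I - {i0}) P \<longrightarrow>
          assoc_scheme (insert {i0} P) {i0} (\<lambda>B. \<Union>i\<in>B. R i))"

definition bose_mesner :: "'i set \<Rightarrow> ('i \<Rightarrow> ('n::finite \<times> 'n) set) \<Rightarrow> (complex^'n^'n) set" where
  "bose_mesner I R = {(\<Sum>i\<in>I. msc (c i) (adj (R i))) | c. True}"

definition primitive_idempotents ::
  "'i set \<Rightarrow> ('i \<Rightarrow> ('n::finite \<times> 'n) set) \<Rightarrow> 'j set \<Rightarrow> ('j \<Rightarrow> complex^'n^'n) \<Rightarrow> bool" where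
  "primitive_idempotents I R J E \<longleftrightarrow>
     finite J \<and> card J = card I \<and>
     (\<forall>j\<in>J. E j \<in> bose_mesner I R \<and> E j \<noteq> 0) \<and>
     (\<forall>j\<in>J. \<forall>l\<in>J. E j ** E l = (if j = l then E j else 0)) \<and>
     (\<Sum>j\<in>J. E j) = mat 1"

text \<open>The eigenvalue p of A on V = E C^X, i.e. A E = p E.\<close>
definition eigenvalue_on :: "complex^'n^'n \<Rightarrow> complex^'n^'n \<Rightarrow> complex" where
  "eigenvalue_on A E = (THE p. A ** E = msc p E)"

definition symmetrization :: "(nat \<Rightarrow> ('n \<times> 'n) set) \<Rightarrow> nat \<Rightarrow> nat \<Rightarrow> ('n \<times> 'n) set" where
  "symmetrization R d i = (if i = d then R d \<union> R (Suc d) else R i)"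

end

theory Submission
  imports Defs
begin

text \<open>On \<open>\<tilde>E\<^sub>l\<close> with \<open>1 \<le> l \<le> d-1\<close> the symmetric relation \<open>R\<^sub>m\<close>, \<open>1 \<le> m \<le> d-1\<close>,
  has eigenvalue \<open>b\<^sub>m\<close> if \<open>m = l\<close> and \<open>a\<^sub>m\<close> otherwise. Hence the hypotheses force
  \<open>E\<^sub>i = \<tilde>E\<^sub>s\<close>, \<open>E\<^sub>j = \<tilde>E\<^sub>r\<close> and \<open>r \<noteq> s\<close>, and among these relations exactly \<open>R\<^sub>r\<close> and \<open>R\<^sub>s\<close>
  separate \<open>V\<^sub>i\<close> from \<open>V\<^sub>j\<close>; \<open>A\<^sub>0\<close> is the identity. Every adjacency matrix acts on every
  primitive idempotent by the same scalar from either side, so transposing \<open>E\<^sub>h A\<^sub>d = \<theta> E\<^sub>h\<close>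
  for the symmetric \<open>E\<^sub>h = \<tilde>E\<^sub>l\<close> gives \<open>A\<^bsub>d+1\<^esub> E\<^sub>h = \<theta> E\<^sub>h\<close>. As \<open>A\<^sub>d + A\<^bsub>d+1\<^esub>\<close> has
  eigenvalue \<open>a\<^sub>d\<close> there, \<open>A\<^sub>d\<close> and \<open>A\<^bsub>d+1\<^esub>\<close> both have eigenvalue \<open>a\<^sub>d / 2\<close> on \<open>V\<^sub>i\<close> and
  on \<open>V\<^sub>j\<close>.\<close>

interpretation mvs: vector_space "msc :: complex \<Rightarrow> complex^'n^'n \<Rightarrow> complex^'n^'n"
  by unfold_locales (auto simp: msc_def vec_eq_iff algebra_simps)

lemma msc_matrix_mult_left: "msc c A ** B = msc c (A ** B)"
  by (simp add: msc_def matrix_matrix_mult_def vec_eq_iff sum_distrib_left mult.assoc)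

lemma msc_matrix_mult_right: "A ** msc c B = msc c (A ** B)"
  by (simp add: msc_def matrix_matrix_mult_def vec_eq_iff sum_distrib_left mult.left_commute)

lemma matrix_add_rdistrib: "(A + B) ** (C::'a::semiring_1^'n^'m) = A ** C + B ** C"
  by (simp add: matrix_matrix_mult_def vec_eq_iff sum.distrib distrib_right)

lemma transpose_msc: "transpose (msc c A) = msc c (transpose A)"
  by (simp add: vec_eq_iff transpose_def msc_def)

lemma msc_right_cancel: "msc p E = msc q E \<Longrightarrow> E \<noteq> 0 \<Longrightarrow> p = q"
  by (auto simp: msc_def vec_eq_iff)

lemma eigenvalue_on_eqI: "A ** E = msc p E \<Longrightarrow> E \<noteq> 0 \<Longrightarrow> eigenvalue_on A E = p"
  unfolding eigenvalue_on_def by (rule the_equality) (auto dest: msc_right_cancel)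

lemma eigenvalue_on_adj_Id:
  fixes E :: "complex^'n^'n"
  shows "E \<noteq> 0 \<Longrightarrow> eigenvalue_on (adj Id) E = 1"
proof (rule eigenvalue_on_eqI)
  have "adj Id = (mat 1 :: complex^'n^'n)"
    by (simp add: adj_def mat_def vec_eq_iff)
  then show "adj Id ** E = msc 1 E"
    by simp
qed

lemma adj_Un: "Q \<inter> Q' = {} \<Longrightarrow> adj (Q \<union> Q') = adj Q + adj Q'"
  by (auto simp: adj_def vec_eq_iff)

lemma transpose_adj: "transpose (adj Q) = adj (Q\<inverse>)"
  by (simp add: adj_def transpose_def vec_eq_iff)

lemma bose_mesner_subset_span: "bose_mesner I R \<subseteq> mvs.span (adj ` R ` I)"
  unfolding bose_mesner_def
proof clarify
  fix c
  show "(\<Sum>i\<in>I. msc (c i) (adj (R i))) \<in> mvs.span (adj ` R ` I)"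
    by (intro mvs.span_sum mvs.span_scale mvs.span_base) simp
qed

lemma bose_mesner_transpose:
  assumes "\<forall>i\<in>I. (R i)\<inverse> = R i" and "M \<in> bose_mesner I R"
  shows "transpose M = M"
proof -
  obtain c where M: "M = (\<Sum>i\<in>I. msc (c i) (adj (R i)))"
    using assms(2) unfolding bose_mesner_def by blast
  have "transpose (adj (R i)) $ x $ y = adj (R i) $ x $ y" if "i \<in> I" for i x y
    using assms(1) that by (simp add: transpose_adj)
  then show ?thesis
    unfolding M by (auto simp: vec_eq_iff sum_component msc_def transpose_def intro!: sum.cong)
qed

lemma span_mult_right_eq_0:
  fixes F :: "complex^'n^'n"
  assumes "M \<in> mvs.span W" and "\<forall>w\<in>W. w ** F = 0"
  shows "M ** F = 0"
  using assms
  by (induction rule: mvs.span_induct_alt)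
     (auto simp: matrix_add_rdistrib msc_matrix_mult_left mvs.scale_zero_right)

lemma span_acts_as_scalar:
  fixes F :: "complex^'n^'n"
  assumes "M \<in> mvs.span W" and "\<forall>w\<in>W. \<exists>p. w ** F = msc p F \<and> F ** w = msc p F"
  shows "\<exists>p. M ** F = msc p F \<and> F ** M = msc p F"
  using assms
proof (induction rule: mvs.span_induct_alt)
  case base
  show ?case by (intro exI[of _ 0]) simp
next
  case (step c w N)
  obtain p q where "w ** F = msc p F" "F ** w = msc p F" "N ** F = msc q F" "F ** N = msc q F"
    using step by blast
  then show ?case
    by (intro exI[of _ "c * p + q"])
       (simp add: matrix_add_rdistrib matrix_add_ldistrib msc_matrix_mult_left
         msc_matrix_mult_right mvs.scale_left_distrib)
qed

context
  fixes I :: "'i set" and R :: "'i \<Rightarrow> ('n::finite \<times> 'n) set"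
    and J :: "'j set" and E :: "'j \<Rightarrow> complex^'n^'n"
  assumes idem: "primitive_idempotents I R J E"
begin

lemma primitive_idempotents_mult:
  "j \<in> J \<Longrightarrow> l \<in> J \<Longrightarrow> E j ** E l = (if j = l then E j else 0)"
  using idem unfolding primitive_idempotents_def by blast

lemma primitive_idempotents_nonzero: "j \<in> J \<Longrightarrow> E j \<noteq> 0"
  using idem unfolding primitive_idempotents_def by blast

lemma primitive_idempotents_inj: "inj_on E J"
proof (rule inj_onI, rule ccontr)
  fix x y assume xy: "x \<in> J" "y \<in> J" "E x = E y" and "x \<noteq> y"
  have "E x ** E y = 0" and "E y ** E y = E y"
    using primitive_idempotents_mult xy(1,2) \<open>x \<noteq> y\<close> by simp_all
  then show False
    using primitive_idempotents_nonzero xy by simp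
qed

lemma primitive_idempotents_independent: "mvs.independent (E ` J)"
  unfolding mvs.dependent_def
proof clarify
  fix l assume l: "l \<in> J" and span: "E l \<in> mvs.span (E ` J - {E l})"
  have "\<forall>w\<in>E ` J - {E l}. w ** E l = 0"
    using primitive_idempotents_mult l by (auto split: if_splits)
  with span have "E l ** E l = 0"
    by (rule span_mult_right_eq_0)
  then show False
    using primitive_idempotents_mult primitive_idempotents_nonzero l by simp
qed

text \<open>The \<open>card I\<close> independent idempotents lie in the span of the at most \<open>card I\<close>
  adjacency matrices, so they span it.\<close>

lemma adj_in_span_primitive_idempotents:
  assumes "finite I" and "m \<in> I"
  shows "adj (R m) \<in> mvs.span (E ` J)"
proof (rule ccontr)
  let ?A = "adj (R m)"
  assume A: "?A \<notin> mvs.span (E ` J)"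
  have J: "finite J" "card J = card I" "E ` J \<subseteq> bose_mesner I R"
    using idem unfolding primitive_idempotents_def by auto
  have "?A \<notin> E ` J"
    using A mvs.span_base by blast
  then have "Suc (card I) = card (insert ?A (E ` J))"
    using J(1,2) primitive_idempotents_inj by (simp add: card_image)
  also have "\<dots> \<le> card (adj ` R ` I)"
  proof -
    have "mvs.independent (insert ?A (E ` J))"
      using A primitive_idempotents_independent by (rule mvs.independent_insertI)
    moreover have "insert ?A (E ` J) \<subseteq> mvs.span (adj ` R ` I)"
      using J(3) bose_mesner_subset_span assms(2) by (auto intro: mvs.span_base)
    ultimately show ?thesis
      using assms(1) by (simp add: mvs.independent_span_bound)
  qed
  also have "card (adj ` R ` I) \<le> card I"
    unfolding image_comp using assms(1) by (rule card_image_le)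
  finally show False
    by simp
qed

lemma adj_acts_as_scalar:
  assumes "finite I" and "m \<in> I" and "h \<in> J"
  shows "\<exists>p. adj (R m) ** E h = msc p (E h) \<and> E h ** adj (R m) = msc p (E h)"
proof (rule span_acts_as_scalar[OF adj_in_span_primitive_idempotents[OF assms(1,2)]])
  have "\<exists>p. E l ** E h = msc p (E h) \<and> E h ** E l = msc p (E h)" if "l \<in> J" for l
  proof (cases "l = h")
    case True
    then show ?thesis
      using primitive_idempotents_mult assms(3) by (intro exI[of _ 1]) simp
  next
    case False
    then show ?thesis
      using primitive_idempotents_mult assms(3) that by (intro exI[of _ 0]) simp
  qed
  then show "\<forall>w\<in>E ` J. \<exists>p. w ** E h = msc p (E h) \<and> E h ** w = msc p (E h)"
    by blast
qed

lemma eigenvalue_on_transpose_pair: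
  assumes "finite I" and "p \<in> I" and "(R p)\<inverse> = R q" and "h \<in> J"
    and "transpose (E h) = E h"
    and "(adj (R p) + adj (R q)) ** E h = msc c (E h)"
  shows "eigenvalue_on (adj (R p)) (E h) = c / 2 \<and> eigenvalue_on (adj (R q)) (E h) = c / 2"
proof -
  obtain \<theta> where left: "adj (R p) ** E h = msc \<theta> (E h)" and right: "E h ** adj (R p) = msc \<theta> (E h)"
    using adj_acts_as_scalar assms(1,2,4) by blast
  have "adj (R q) ** E h = transpose (E h ** adj (R p))"
    by (simp add: matrix_transpose_mul transpose_adj assms(3,5))
  also have "\<dots> = msc \<theta> (E h)"
    by (simp add: right transpose_msc assms(5))
  finally have q: "adj (R q) ** E h = msc \<theta> (E h)" .
  have "msc (2 * \<theta>) (E h) = msc c (E h)"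
    using assms(6) by (simp add: matrix_add_rdistrib left q msc_def vec_eq_iff algebra_simps)
  then have "2 * \<theta> = c"
    using msc_right_cancel primitive_idempotents_nonzero assms(4) by blast
  then have "\<theta> = c / 2"
    by (auto simp: field_simps)
  then show ?thesis
    using left q primitive_idempotents_nonzero assms(4) by (simp add: eigenvalue_on_eqI)
qed

end

lemma eigenvalue_on_symmetrization_unmerged:
  assumes "primitive_idempotents {0..d} (symmetrization R d) {0..d} Et"
    and "\<forall>l\<in>{1..d}. adj (symmetrization R d l) ** Et l = msc (b l) (Et l)"
    and "\<forall>l\<in>{1..d}. \<forall>m\<in>{1..d}. m \<noteq> l \<longrightarrow>
           adj (symmetrization R d l) ** Et m = msc (a l) (Et m)"
    and "m \<in> {1..d-1}" and "l \<in> {1..d-1}"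
  shows "eigenvalue_on (adj (R m)) (Et l) = (if l = m then b m else a m)"
proof (rule eigenvalue_on_eqI)
  have ml: "m \<in> {1..d}" "l \<in> {1..d}" "symmetrization R d m = R m"
    using assms(4,5) by (auto simp: symmetrization_def)
  then show "adj (R m) ** Et l = msc (if l = m then b m else a m) (Et l)"
    using assms(2)[rule_format, of m] assms(3)[rule_format, of m l] by auto
  show "Et l \<noteq> 0"
    using primitive_idempotents_nonzero[OF assms(1), of l] ml(2) by simp
qed

lemma eigenvalue_on_symmetrization_merged:
  assumes "assoc_scheme {0..d+1} 0 R" and "(R d)\<inverse> = R (d+1)"
    and "primitive_idempotents {0..d+1} R {0..d+1} E" and "h \<in> {0..d+1}"
    and "symmetric_scheme {0..d} 0 (symmetrization R d)"
    and "E h \<in> bose_mesner {0..d} (symmetrization R d)"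
    and "adj (symmetrization R d d) ** E h = msc c (E h)"
  shows "eigenvalue_on (adj (R d)) (E h) = c / 2 \<and> eigenvalue_on (adj (R (d+1))) (E h) = c / 2"
proof (rule eigenvalue_on_transpose_pair[OF assms(3) _ _ assms(2,4)])
  show "transpose (E h) = E h"
    using assms(5,6) by (auto simp: symmetric_scheme_def intro: bose_mesner_transpose)
  have "R d \<inter> R (d+1) = {}"
    using assms(1) unfolding assoc_scheme_def by simp
  then show "(adj (R d) + adj (R (d+1))) ** E h = msc c (E h)"
    using assms(7) by (simp add: symmetrization_def adj_Un)
qed simp_all

theorem lemma3p4:
  fixes R :: "nat \<Rightarrow> ('n::finite \<times> 'n) set"
    and d :: nat
    and E Et :: "nat \<Rightarrow> complex^'n^'n"
    and k :: "nat \<Rightarrow> nat"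
    and a b :: "nat \<Rightarrow> complex"
    and i j r s :: nat
  assumes scheme: "assoc_scheme {0..d+1} 0 R"
    and comm: "commutative_scheme {0..d+1} R"
    and transp_d: "(R d)\<inverse> = R (d+1)"
    and sym_rest: "\<forall>l<d. (R l)\<inverse> = R l"
    and idem: "primitive_idempotents {0..d+1} R {0..d+1} E"
    and amor: "amorphic {0..d} 0 (symmetrization R d)"
    and idem_t: "primitive_idempotents {0..d} (symmetrization R d) {0..d} Et"
    and valency: "\<forall>l\<in>{1..d}. \<forall>x. card {y. (x, y) \<in> symmetrization R d l} = k l"
    and num0: "\<forall>l\<in>{1..d}. adj (symmetrization R d l) ** Et 0 = msc (of_nat (k l)) (Et 0)"
    and numb: "\<forall>l\<in>{1..d}. adj (symmetrization R d l) ** Et l = msc (b l) (Et l)"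
    and numa: "\<forall>l\<in>{1..d}. \<forall>m\<in>{1..d}. m \<noteq> l \<longrightarrow>
                 adj (symmetrization R d l) ** Et m = msc (a l) (Et m)"
    and ab: "\<forall>l\<in>{1..d}. a l \<noteq> b l"
    and i: "i \<in> {1..d+1}" and j: "j \<in> {1..d+1}"
    and Ei: "\<exists>l\<in>{1..d-1}. E i = Et l"
    and Ej: "\<exists>l\<in>{1..d-1}. E j = Et l"
    and r: "r \<in> {1..d-1}" and s: "s \<in> {1..d-1}"
    and r_i: "eigenvalue_on (adj (R r)) (E i) = a r"
    and r_j: "eigenvalue_on (adj (R r)) (E j) = b r"
    and s_i: "eigenvalue_on (adj (R s)) (E i) = b s"
    and s_j: "eigenvalue_on (adj (R s)) (E j) = a s"
  shows "r \<noteq> s \<and>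
         (\<forall>m\<in>{0..d+1}. eigenvalue_on (adj (R m)) (E i) \<noteq> eigenvalue_on (adj (R m)) (E j)
                          \<longleftrightarrow> m = r \<or> m = s)"
proof -
  obtain li lj where li: "li \<in> {1..d-1}" "E i = Et li" and lj: "lj \<in> {1..d-1}" "E j = Et lj"
    using Ei Ej by blast
  note unmerged = eigenvalue_on_symmetrization_unmerged[OF idem_t numb numa]
  have "a r \<noteq> b r" "a s \<noteq> b s"
    using ab r s by auto
  then have "li = s" "lj = r" "r \<noteq> s"
    using unmerged[OF r li(1)] unmerged[OF r lj(1)] unmerged[OF s li(1)] unmerged[OF s lj(1)]
      r_i r_j s_i s_j li lj
    by (auto split: if_splits)
  have merged: "eigenvalue_on (adj (R d)) (E h) = a d / 2 \<and> eigenvalue_on (adj (R (d+1))) (E h) = a d / 2"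
    if h: "h \<in> {i, j}" for h
  proof -
    obtain l where l: "l \<in> {1..d-1}" "E h = Et l"
      using li lj h by blast
    have "symmetric_scheme {0..d} 0 (symmetrization R d)"
      using amor unfolding amorphic_def by blast
    moreover have "E h \<in> bose_mesner {0..d} (symmetrization R d)"
      "adj (symmetrization R d d) ** E h = msc (a d) (E h)"
      using idem_t numa l unfolding primitive_idempotents_def by auto
    moreover have "h \<in> {0..d+1}"
      using i j h by auto
    ultimately show ?thesis
      using eigenvalue_on_symmetrization_merged[OF scheme transp_d idem] by blast
  qed
  have "R 0 = Id"
    using scheme unfolding assoc_scheme_def by simp
  then have identity: "eigenvalue_on (adj (R 0)) (E h) = 1" if "h \<in> {i, j}" for h
    using eigenvalue_on_adj_Id primitive_idempotents_nonzero[OF idem] i j that by auto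
  show ?thesis
  proof (intro conjI ballI)
    fix m assume m: "m \<in> {0..d+1}"
    show "eigenvalue_on (adj (R m)) (E i) \<noteq> eigenvalue_on (adj (R m)) (E j) \<longleftrightarrow> m = r \<or> m = s"
    proof (cases "m \<in> {1..d-1}")
      case True
      then have "a m \<noteq> b m"
        using ab by auto
      then show ?thesis
        using unmerged[OF True li(1)] unmerged[OF True lj(1)] li lj \<open>li = s\<close> \<open>lj = r\<close> \<open>r \<noteq> s\<close>
        by auto
    next
      case False
      then have "m = 0 \<or> m = d \<or> m = d+1" "m \<noteq> r" "m \<noteq> s"
        using m r s by auto
      then show ?thesis
        using identity[of i] identity[of j] merged[of i] merged[of j] by (metis insert_iff)
    qed
  qed (fact \<open>r \<noteq> s\<close>)
qed

end
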